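(* Let $\mathcal{H}=(\mathbb{C}^3)^{\otimes 3}$, $E_3=\mathrm{diag}(1,-1,0)$, $\mathcal{L}oc=\{\, i(L\otimes \mathbf{1}\otimes \mathbf{1}+\mathbf{1}\otimes L\otimes \mathbf{1}+\mathbf{1}\otimes\mathbf{1}\otimes L) : L \text{ traceless Hermitian } 3\times 3\,\}$ and $H=E_3\otimes E_3\otimes \mathbf{1}+E_3\otimes \mathbf{1}\otimes E_3+\mathbf{1}\otimes E_3\otimes E_3$. Let $\mathcal{L}$ be the real Lie algebra generated by $\mathcal{L}oc$ and $iH$, and let $\mathrm{Sym}\subseteq\mathcal H$ be the $10$-dimensional symmetric subspace (vectors invariant under all permutations of the tensor factors), which is invariant under $\mathcal L$. Then for every traceless skew-Hermitian operator $X$ on $\mathrm{Sym}$ there exists $Y\in\mathcal{L}$ whose restriction to $\mathrm{Sym}$ equals $X$; i.e., $\mathcal L$ restricted to $\mathrm{Sym}$ contains all of $su(10)$. *)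

theory Defs
  imports "HOL-Analysis.Analysis"
begin

text \<open>The space (C^3)^{(x)3} is complex^(3 => 3): a basis vector is indexed by a
  function t assigning to each tensor position p (of type 3) a local basis index t p.
  Operators on it are complex^(3=>3)^(3=>3).\<close>

type_synonym op3 = "complex^3^3"
type_synonym vec27 = "complex^(3 \<Rightarrow> 3)"
type_synonym op27 = "complex^(3 \<Rightarrow> 3)^(3 \<Rightarrow> 3)"

definition adj :: "complex^'n^'n \<Rightarrow> complex^'n^'n" where
  "adj A = (\<chi> i j. cnj (A $ j $ i))"

definition csmul :: "complex \<Rightarrow> complex^'n^'m \<Rightarrow> complex^'n^'m" where
  "csmul c A = (\<chi> i j. c * A $ i $ j)"

definition kron3 :: "op3 \<Rightarrow> op3 \<Rightarrow> op3 \<Rightarrow> op27" where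
  "kron3 A B C = (\<chi> s t. A $ (s 0) $ (t 0) * B $ (s 1) $ (t 1) * C $ (s 2) $ (t 2))"

definition E3 :: op3 where
  "E3 = (\<chi> i j. if i = j then (if i = 0 then 1 else if i = 1 then -1 else 0) else 0)"

definition Loc :: "op27 set" where
  "Loc = {csmul \<i> (kron3 L (mat 1) (mat 1) + kron3 (mat 1) L (mat 1) + kron3 (mat 1) (mat 1) L)
          | L. adj L = L \<and> trace L = 0}"

definition Hint :: op27 where
  "Hint = kron3 E3 E3 (mat 1) + kron3 E3 (mat 1) E3 + kron3 (mat 1) E3 E3"

inductive_set lie_gen :: "(complex^'n^'n) set \<Rightarrow> (complex^'n^'n) set" for G where
  gen: "X \<in> G \<Longrightarrow> X \<in> lie_gen G"
| zero: "0 \<in> lie_gen G"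
| add: "X \<in> lie_gen G \<Longrightarrow> Y \<in> lie_gen G \<Longrightarrow> X + Y \<in> lie_gen G"
| scale: "X \<in> lie_gen G \<Longrightarrow> csmul (complex_of_real r) X \<in> lie_gen G"
| bracket: "X \<in> lie_gen G \<Longrightarrow> Y \<in> lie_gen G \<Longrightarrow> X ** Y - Y ** X \<in> lie_gen G"

definition Lie :: "op27 set" where
  "Lie = lie_gen (Loc \<union> {csmul \<i> Hint})"

definition Sym :: "vec27 set" where
  "Sym = {v. \<forall>\<sigma>. \<sigma> permutes (UNIV :: 3 set) \<longrightarrow> (\<forall>t. v $ (t \<circ> \<sigma>) = v $ t)}"

definition cinner :: "complex^'n \<Rightarrow> complex^'n \<Rightarrow> complex" where
  "cinner v w = (\<Sum>i\<in>UNIV. cnj (v $ i) * w $ i)"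

end

theory Submission
  imports Defs
begin

text \<open>Every element of \<open>Lie\<close> commutes with the permutations of the tensor factors, so
  \<open>Y \<mapsto> sym_matrix Y\<close>, the matrix of \<open>Y\<close> on \<open>Sym\<close> in the orthogonal basis of orbit indicators,
  is a Lie algebra homomorphism, and an operator preserving \<open>Sym\<close> is determined on \<open>Sym\<close> by
  this matrix. The images of \<open>\<i> Hint\<close> and of the local operator of \<open>E3\<close> are diagonal, with
  weights that separate the ten basis vectors. The images of the local operators of the three real
  antisymmetric generators of \<open>su(3)\<close> are sums of root matrices; commutators with the diagonal
  images isolate single root matrices, commutators of these reach all root matrices, and the root
  matrices span the (weighted) \<open>su(10)\<close>.\<close>

lemma exhaust_3: "(x::3) = 0 \<or> x = 1 \<or> x = 2"
proof (induct x)
  case (of_int z)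
  then have "z = 0 \<or> z = 1 \<or> z = 2" by fastforce
  then show ?case by auto
qed

lemma forall_3: "(\<forall>x::3. P x) \<longleftrightarrow> P 0 \<and> P 1 \<and> P 2"
  using exhaust_3 by metis

lemma UNIV_3: "(UNIV::3 set) = {0, 1, 2}"
  using exhaust_3 by auto

lemma sum_UNIV_3: "sum f (UNIV::3 set) = f 0 + f 1 + f 2"
  unfolding UNIV_3 by (simp add: ac_simps)

definition triple :: "3 \<Rightarrow> 3 \<Rightarrow> 3 \<Rightarrow> 3 \<Rightarrow> 3" where
  "triple a b c = (\<lambda>p. if p = 0 then a else if p = 1 then b else c)"

lemma triple_apply [simp]: "triple a b c 0 = a" "triple a b c 1 = b" "triple a b c 2 = c"
  by (simp_all add: triple_def)

lemma triple_eta: "triple (t 0) (t 1) (t 2) = t"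
proof
  fix p show "triple (t 0) (t 1) (t 2) p = t p" using exhaust_3[of p] by auto
qed

lemma triple_eq_iff [simp]: "triple a b c = triple a' b' c' \<longleftrightarrow> a = a' \<and> b = b' \<and> c = c'"
  by (metis triple_apply)

lemma comp_triple [simp]: "f \<circ> triple a b c = triple (f a) (f b) (f c)"
proof
  fix p show "(f \<circ> triple a b c) p = triple (f a) (f b) (f c) p" using exhaust_3[of p] by auto
qed

lemma sum_UNIV_index:
  "sum f (UNIV::(3 \<Rightarrow> 3) set) = (\<Sum>a\<in>UNIV. \<Sum>b\<in>UNIV. \<Sum>c\<in>UNIV. f (triple a b c))"
proof -
  have "bij_betw (\<lambda>(a, b, c). triple a b c) UNIV (UNIV::(3 \<Rightarrow> 3) set)"
    by (rule bij_betw_byWitness[where f'="\<lambda>t. (t 0, t 1, t 2)"]) (auto simp: triple_eta)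
  then have "sum f (UNIV::(3 \<Rightarrow> 3) set) = sum (f \<circ> (\<lambda>(a, b, c). triple a b c)) (UNIV \<times> UNIV \<times> UNIV)"
    by (simp add: sum.reindex_bij_betw)
  also have "\<dots> = (\<Sum>a\<in>UNIV. \<Sum>b\<in>UNIV. \<Sum>c\<in>UNIV. f (triple a b c))"
    unfolding sum.cartesian_product' by simp
  finally show ?thesis .
qed

definition perms3 :: "(3 \<Rightarrow> 3) list" where
  "perms3 = [triple 0 1 2, triple 1 0 2, triple 2 1 0, triple 0 2 1, triple 1 2 0, triple 2 0 1]"

lemma permutes_3_iff: "\<sigma> permutes (UNIV::3 set) \<longleftrightarrow> \<sigma> \<in> set perms3"
proof
  assume "\<sigma> permutes UNIV"
  then have "inj \<sigma>" by (rule permutes_inj)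
  then have "\<sigma> 0 \<noteq> \<sigma> 1" "\<sigma> 0 \<noteq> \<sigma> 2" "\<sigma> 1 \<noteq> \<sigma> 2"
    by (simp_all add: inj_eq)
  moreover have "\<forall>a b c. a \<noteq> b \<longrightarrow> a \<noteq> c \<longrightarrow> b \<noteq> c \<longrightarrow> triple a b c \<in> set perms3"
    by (simp only: forall_3) (simp add: perms3_def)
  ultimately have "triple (\<sigma> 0) (\<sigma> 1) (\<sigma> 2) \<in> set perms3"
    by blast
  then show "\<sigma> \<in> set perms3"
    by (simp only: triple_eta)
next
  have inj_triple: "inj (triple a b c)" if "a \<noteq> b" "a \<noteq> c" "b \<noteq> c" for a b c
    using that exhaust_3 by (auto simp: inj_def triple_def)
  assume "\<sigma> \<in> set perms3"
  then have "inj \<sigma>"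
    unfolding perms3_def by (auto intro: inj_triple)
  then have "bij \<sigma>"
    using finite_UNIV_inj_surj[of \<sigma>] by (simp add: bij_def)
  then show "\<sigma> permutes UNIV"
    by (intro bij_imp_permutes) auto
qed

section \<open>Occupation types and the symmetric subspace\<close>

text \<open>\<open>S\<^sub>n\<^sub>0\<^sub>n\<^sub>1\<^sub>n\<^sub>2\<close>: exactly \<open>n\<^sub>j\<close> tensor positions carry the local basis index \<open>j\<close>.\<close>
datatype occ = S300 | S210 | S201 | S120 | S111 | S102 | S030 | S021 | S012 | S003

lemma UNIV_occ: "(UNIV::occ set) = {S300, S210, S201, S120, S111, S102, S030, S021, S012, S003}"
  using occ.exhaust by auto

instance occ :: finite
  by standard (simp add: UNIV_occ)

definition index_count :: "3 \<Rightarrow> (3 \<Rightarrow> 3) \<Rightarrow> nat" where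
  "index_count j t = (\<Sum>p\<in>UNIV. if t p = j then 1 else 0)"

definition occ_of_counts :: "nat \<Rightarrow> nat \<Rightarrow> occ" where
  "occ_of_counts n0 n1 =
    (if n0 = 3 then S300 else if n0 = 2 \<and> n1 = 1 then S210 else if n0 = 2 then S201
     else if n0 = 1 \<and> n1 = 2 then S120 else if n0 = 1 \<and> n1 = 1 then S111 else if n0 = 1 then S102
     else if n1 = 3 then S030 else if n1 = 2 then S021 else if n1 = 1 then S012 else S003)"

definition occ_of :: "(3 \<Rightarrow> 3) \<Rightarrow> occ" where
  "occ_of t = occ_of_counts (index_count 0 t) (index_count 1 t)"

lemma occ_of_triple:
  "occ_of (triple a b c) = occ_of_counts
     ((if a = 0 then 1 else 0) + (if b = 0 then 1 else 0) + (if c = 0 then 1 else 0))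
     ((if a = 1 then 1 else 0) + (if b = 1 then 1 else 0) + (if c = 1 then 1 else 0))"
  by (simp add: occ_of_def index_count_def sum_UNIV_3)

lemma occ_of_comp_permutes:
  assumes "\<sigma> permutes (UNIV::3 set)"
  shows "occ_of (t \<circ> \<sigma>) = occ_of t"
proof -
  have "index_count j (t \<circ> \<sigma>) = index_count j t" for j
    unfolding index_count_def using sum.permute[OF assms, of "\<lambda>p. if t p = j then 1 else 0::nat"]
    by (simp add: comp_def)
  then show ?thesis by (simp add: occ_of_def)
qed

primrec orbit :: "occ \<Rightarrow> (3 \<Rightarrow> 3) list" where
  "orbit S300 = [triple 0 0 0]"
| "orbit S210 = [triple 0 0 1, triple 0 1 0, triple 1 0 0]"
| "orbit S201 = [triple 0 0 2, triple 0 2 0, triple 2 0 0]"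
| "orbit S120 = [triple 0 1 1, triple 1 0 1, triple 1 1 0]"
| "orbit S111 = [triple 0 1 2, triple 0 2 1, triple 1 0 2, triple 1 2 0, triple 2 0 1, triple 2 1 0]"
| "orbit S102 = [triple 0 2 2, triple 2 0 2, triple 2 2 0]"
| "orbit S030 = [triple 1 1 1]"
| "orbit S021 = [triple 1 1 2, triple 1 2 1, triple 2 1 1]"
| "orbit S012 = [triple 1 2 2, triple 2 1 2, triple 2 2 1]"
| "orbit S003 = [triple 2 2 2]"

definition occ_rep :: "occ \<Rightarrow> (3 \<Rightarrow> 3)" where
  "occ_rep a = hd (orbit a)"

definition orbit_size :: "occ \<Rightarrow> nat" where
  "orbit_size a = length (orbit a)"

lemma orbit_size_pos: "orbit_size a > 0"
  by (cases a) (simp_all add: orbit_size_def)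

lemma occ_of_occ_rep [simp]: "occ_of (occ_rep a) = a"
  by (cases a) (simp_all add: occ_rep_def occ_of_triple occ_of_counts_def)

lemma sum_occ_of_eq:
  "(\<Sum>t\<in>UNIV. if occ_of t = a then f t else 0) = sum_list (map f (orbit a))"
  by (cases a) (simp_all add: sum_UNIV_index sum_UNIV_3 occ_of_triple occ_of_counts_def ac_simps)

lemma sum_occ_of_indicator: "(\<Sum>t\<in>UNIV. if occ_of t = a then 1 else 0) = of_nat (orbit_size a)"
  by (simp add: sum_occ_of_eq orbit_size_def sum_list_triv)

lemma orbit_witness: "\<exists>\<sigma>. \<sigma> permutes (UNIV::3 set) \<and> t = occ_rep (occ_of t) \<circ> \<sigma>"
proof -
  have "\<forall>a b c. \<exists>\<sigma>\<in>set perms3. triple a b c = occ_rep (occ_of (triple a b c)) \<circ> \<sigma>"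
    by (simp only: forall_3) (simp add: perms3_def occ_rep_def occ_of_triple occ_of_counts_def)
  then show ?thesis
    by (metis permutes_3_iff triple_eta)
qed

definition sym_basis :: "occ \<Rightarrow> vec27" where
  "sym_basis a = (\<chi> t. if occ_of t = a then 1 else 0)"

lemma sym_basis_in_Sym: "sym_basis a \<in> Sym"
  by (simp add: Sym_def sym_basis_def occ_of_comp_permutes)

lemma Sym_apply:
  assumes "v \<in> Sym"
  shows "v $ t = v $ occ_rep (occ_of t)"
proof -
  obtain \<sigma> where \<sigma>: "\<sigma> permutes UNIV" and t: "t = occ_rep (occ_of t) \<circ> \<sigma>"
    using orbit_witness by blast
  have "v $ (occ_rep (occ_of t) \<circ> \<sigma>) = v $ occ_rep (occ_of t)"
    using assms \<sigma> by (simp add: Sym_def)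
  then show ?thesis
    using t by metis
qed

lemma Sym_expansion:
  assumes "v \<in> Sym"
  shows "v = (\<Sum>a\<in>UNIV. v $ occ_rep a *s sym_basis a)"
proof (rule vec_eq_iff[THEN iffD2], rule allI)
  fix t
  have "(\<Sum>a\<in>UNIV. v $ occ_rep a *s sym_basis a) $ t = v $ occ_rep (occ_of t)"
    by (simp add: sym_basis_def if_distrib cong: if_cong)
  then show "v $ t = (\<Sum>a\<in>UNIV. v $ occ_rep a *s sym_basis a) $ t"
    using Sym_apply[OF assms] by simp
qed

lemma cinner_sym_basis:
  assumes "w \<in> Sym"
  shows "cinner (sym_basis a) w = of_nat (orbit_size a) * w $ occ_rep a"
proof -
  have "cinner (sym_basis a) w = (\<Sum>t\<in>UNIV. if occ_of t = a then w $ occ_rep a else 0)"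
    unfolding cinner_def sym_basis_def using Sym_apply[OF assms] by (intro sum.cong) auto
  also have "\<dots> = w $ occ_rep a * (\<Sum>t\<in>UNIV. if occ_of t = a then 1 else 0)"
    by (simp add: sum_distrib_left if_distrib cong: if_cong)
  finally show ?thesis
    by (simp add: sum_occ_of_indicator)
qed

section \<open>Permutation-invariant operators\<close>

definition perm_invariant :: "op27 \<Rightarrow> bool" where
  "perm_invariant Y \<longleftrightarrow>
     (\<forall>\<sigma>. \<sigma> permutes (UNIV::3 set) \<longrightarrow> (\<forall>s t. Y $ (s \<circ> \<sigma>) $ (t \<circ> \<sigma>) = Y $ s $ t))"

lemma sum_index_comp_permutes:
  fixes f :: "(3 \<Rightarrow> 3) \<Rightarrow> 'a::comm_monoid_add"
  assumes "\<sigma> permutes (UNIV::3 set)"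
  shows "(\<Sum>r\<in>UNIV. f r) = (\<Sum>r\<in>UNIV. f (r \<circ> \<sigma>))"
proof (rule sum.reindex_bij_witness[where j="\<lambda>r. r \<circ> inv \<sigma>" and i="\<lambda>r. r \<circ> \<sigma>"])
  have "inv \<sigma> \<circ> \<sigma> = id" "\<sigma> \<circ> inv \<sigma> = id"
    using permutes_inv_o[OF assms] by auto
  then show "r \<circ> inv \<sigma> \<circ> \<sigma> = r" "r \<circ> \<sigma> \<circ> inv \<sigma> = r" "f (r \<circ> inv \<sigma> \<circ> \<sigma>) = f r" for r :: "3 \<Rightarrow> 3"
    by (simp_all add: o_assoc[symmetric])
qed auto

lemma perm_invariant_preserves_Sym:
  assumes Y: "perm_invariant Y" and v: "v \<in> Sym"
  shows "Y *v v \<in> Sym"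
  unfolding Sym_def
proof (intro CollectI allI impI)
  fix \<sigma> :: "3 \<Rightarrow> 3" and t
  assume \<sigma>: "\<sigma> permutes UNIV"
  have "(Y *v v) $ (t \<circ> \<sigma>) = (\<Sum>r\<in>UNIV. Y $ (t \<circ> \<sigma>) $ (r \<circ> \<sigma>) * v $ (r \<circ> \<sigma>))"
    unfolding matrix_vector_mult_def vec_lambda_beta by (rule sum_index_comp_permutes[OF \<sigma>])
  also have "\<dots> = (Y *v v) $ t"
    using Y v \<sigma> by (simp add: perm_invariant_def Sym_def matrix_vector_mult_def)
  finally show "(Y *v v) $ (t \<circ> \<sigma>) = (Y *v v) $ t" .
qed

lemma perm_invariant_mult:
  assumes A: "perm_invariant A" and B: "perm_invariant B"
  shows "perm_invariant (A ** B)"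
  unfolding perm_invariant_def
proof (intro allI impI)
  fix \<sigma> :: "3 \<Rightarrow> 3" and s t
  assume \<sigma>: "\<sigma> permutes UNIV"
  have "(A ** B) $ (s \<circ> \<sigma>) $ (t \<circ> \<sigma>) = (\<Sum>r\<in>UNIV. A $ (s \<circ> \<sigma>) $ (r \<circ> \<sigma>) * B $ (r \<circ> \<sigma>) $ (t \<circ> \<sigma>))"
    unfolding matrix_matrix_mult_def vec_lambda_beta by (rule sum_index_comp_permutes[OF \<sigma>])
  also have "\<dots> = (A ** B) $ s $ t"
    using A B \<sigma> by (simp add: perm_invariant_def matrix_matrix_mult_def)
  finally show "(A ** B) $ (s \<circ> \<sigma>) $ (t \<circ> \<sigma>) = (A ** B) $ s $ t" .
qed

lemma perm_invariant_add: "perm_invariant A \<Longrightarrow> perm_invariant B \<Longrightarrow> perm_invariant (A + B)"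
  and perm_invariant_diff: "perm_invariant A \<Longrightarrow> perm_invariant B \<Longrightarrow> perm_invariant (A - B)"
  and perm_invariant_zero: "perm_invariant 0"
  and perm_invariant_csmul: "perm_invariant A \<Longrightarrow> perm_invariant (csmul c A)"
  by (simp_all add: perm_invariant_def csmul_def)

lemma perm_invariant_kron3_sym:
  "perm_invariant (kron3 A B B + kron3 B A B + kron3 B B A)"
  "perm_invariant (kron3 A A B + kron3 A B A + kron3 B A A)"
  unfolding perm_invariant_def permutes_3_iff
  by (auto simp: perms3_def kron3_def ac_simps)

lemma Lie_perm_invariant: "Y \<in> Lie \<Longrightarrow> perm_invariant Y"
  unfolding Lie_def
proof (induction rule: lie_gen.induct)
  case (gen Y)
  then show ?case
    unfolding Loc_def Hint_def by (auto intro: perm_invariant_csmul perm_invariant_kron3_sym)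
qed (simp_all add: perm_invariant_zero perm_invariant_add perm_invariant_csmul
    perm_invariant_diff perm_invariant_mult)

section \<open>Matrices of operators on the symmetric subspace\<close>

definition sym_matrix :: "op27 \<Rightarrow> complex^occ^occ" where
  "sym_matrix Y = (\<chi> a b. (Y *v sym_basis b) $ occ_rep a)"

lemma matrix_vector_mult_sym_basis:
  assumes "\<forall>v\<in>Sym. Y *v v \<in> Sym"
  shows "Y *v sym_basis b = (\<Sum>a\<in>UNIV. sym_matrix Y $ a $ b *s sym_basis a)"
  using Sym_expansion assms sym_basis_in_Sym by (simp add: sym_matrix_def)

lemma sym_matrix_mult:
  assumes "\<forall>v\<in>Sym. Z *v v \<in> Sym"
  shows "sym_matrix (Y ** Z) = sym_matrix Y ** sym_matrix Z"
proof -
  have "(Y ** Z) *v sym_basis b = (\<Sum>c\<in>UNIV. sym_matrix Z $ c $ b *s (Y *v sym_basis c))" for b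
    by (simp add: matrix_vector_mul_assoc[symmetric] matrix_vector_mult_sym_basis[OF assms]
        linear_sum[OF matrix_vector_mul_linear] vector_scalar_commute)
  then show ?thesis
    by (simp add: sym_matrix_def matrix_matrix_mult_def vec_eq_iff mult.commute)
qed

lemma sym_matrix_add: "sym_matrix (A + B) = sym_matrix A + sym_matrix B"
  and sym_matrix_diff: "sym_matrix (A - B) = sym_matrix A - sym_matrix B"
  and sym_matrix_zero: "sym_matrix 0 = 0"
  by (simp_all add: sym_matrix_def vec_eq_iff matrix_vector_mult_add_rdistrib
      matrix_vector_mult_diff_rdistrib)

lemma sym_matrix_csmul_of_real: "sym_matrix (csmul (of_real r) A) = r *\<^sub>R sym_matrix A"
  unfolding vec_eq_iff
  by (simp add: sym_matrix_def matrix_vector_mult_def csmul_def sum_distrib_left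
      mult.assoc scaleR_conv_of_real[where 'a=complex])

lemma eq_on_Sym_if_sym_matrix_eq:
  assumes "\<forall>v\<in>Sym. X *v v \<in> Sym" "\<forall>v\<in>Sym. Y *v v \<in> Sym" "sym_matrix X = sym_matrix Y"
    and "v \<in> Sym"
  shows "X *v v = Y *v v"
proof -
  have basis: "X *v sym_basis b = Y *v sym_basis b" for b
    using assms(1-3) by (simp add: matrix_vector_mult_sym_basis)
  define c where "c b = v $ occ_rep b" for b
  have "v = (\<Sum>b\<in>UNIV. c b *s sym_basis b)"
    using Sym_expansion[OF \<open>v \<in> Sym\<close>] by (simp add: c_def)
  then show ?thesis
    by (simp add: linear_sum[OF matrix_vector_mul_linear] vector_scalar_commute basis)
qed

section \<open>Weighted skew-adjoint matrices\<close>

definition lie_bracket :: "'a::ring_1^'n^'n \<Rightarrow> 'a^'n^'n \<Rightarrow> 'a^'n^'n" where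
  "lie_bracket X Y = X ** Y - Y ** X"

text \<open>The matrices \<open>sym_matrix X\<close> of the traceless skew-adjoint \<open>X\<close> preserving \<open>Sym\<close>: the basis
  \<open>sym_basis\<close> is orthogonal, but \<open>sym_basis a\<close> has squared norm \<open>orbit_size a\<close>.\<close>
definition weighted_su :: "complex^occ^occ \<Rightarrow> bool" where
  "weighted_su X \<longleftrightarrow>
     (\<forall>a b. of_nat (orbit_size a) * X $ a $ b = - (of_nat (orbit_size b) * cnj (X $ b $ a)))
     \<and> trace X = 0"

text \<open>Weighted analogues of \<open>E\<^sub>x\<^sub>y - E\<^sub>y\<^sub>x\<close>, \<open>i(E\<^sub>x\<^sub>y + E\<^sub>y\<^sub>x)\<close> and \<open>i(E\<^sub>x\<^sub>x - E\<^sub>y\<^sub>y)\<close>.\<close>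
definition offdiag_re :: "occ \<Rightarrow> occ \<Rightarrow> complex^occ^occ" where
  "offdiag_re x y = (\<chi> i j. (if i = x \<and> j = y then of_nat (orbit_size y) else 0)
                          - (if i = y \<and> j = x then of_nat (orbit_size x) else 0))"

definition offdiag_im :: "occ \<Rightarrow> occ \<Rightarrow> complex^occ^occ" where
  "offdiag_im x y = (\<chi> i j. \<i> * ((if i = x \<and> j = y then of_nat (orbit_size y) else 0)
                                + (if i = y \<and> j = x then of_nat (orbit_size x) else 0)))"

definition diag_diff :: "occ \<Rightarrow> occ \<Rightarrow> complex^occ^occ" where
  "diag_diff x y =
     (\<chi> i j. if i = j then \<i> * ((if i = x then 1 else 0) - (if i = y then 1 else 0)) else 0)"

definition diag_mat :: "(occ \<Rightarrow> real) \<Rightarrow> complex^occ^occ" where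
  "diag_mat f = (\<chi> i j. if i = j then \<i> * of_real (f i) else 0)"

lemma sum_if_mult_left:
  fixes f :: "'n::finite \<Rightarrow> 'a::semiring_1"
  shows "(\<Sum>k\<in>UNIV. (if P \<and> k = b then p else 0) * f k) = (if P then p * f b else 0)"
  by (cases P) (simp_all add: if_distrib if_distribR cong: if_cong)

lemma offdiag_re_mult:
  "(offdiag_re x y ** G) $ i $ j =
     (if i = x then of_nat (orbit_size y) * G $ y $ j else 0)
     - (if i = y then of_nat (orbit_size x) * G $ x $ j else 0)"
  by (simp add: matrix_matrix_mult_def offdiag_re_def left_diff_distrib sum_subtractf sum_if_mult_left)

lemma offdiag_im_mult:
  "(offdiag_im x y ** G) $ i $ j =
     \<i> * ((if i = x then of_nat (orbit_size y) * G $ y $ j else 0)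
            + (if i = y then of_nat (orbit_size x) * G $ x $ j else 0))"
  by (simp add: matrix_matrix_mult_def offdiag_im_def distrib_right sum.distrib sum_if_mult_left
      mult.assoc sum_distrib_left[symmetric])

lemma lie_bracket_offdiag_re_chain:
  assumes "x \<noteq> y" "y \<noteq> z" "x \<noteq> z"
  shows "lie_bracket (offdiag_re x y) (offdiag_re y z) = real (orbit_size y) *\<^sub>R offdiag_re x z"
  using assms unfolding lie_bracket_def vec_eq_iff
  by (simp add: offdiag_re_mult) (auto simp: offdiag_re_def scaleR_conv_of_real[where 'a=complex])

lemma lie_bracket_offdiag_re_disjoint:
  assumes "x \<noteq> z" "x \<noteq> w" "y \<noteq> z" "y \<noteq> w"
  shows "lie_bracket (offdiag_re x y) (offdiag_re z w) = 0"
  using assms unfolding lie_bracket_def vec_eq_iff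
  by (simp add: offdiag_re_mult) (auto simp: offdiag_re_def)

lemma lie_bracket_offdiag_re_im:
  assumes "x \<noteq> y"
  shows "lie_bracket (offdiag_re x y) (offdiag_im x y)
           = (2 * real (orbit_size x) * real (orbit_size y)) *\<^sub>R diag_diff x y"
  using assms unfolding lie_bracket_def vec_eq_iff
  by (simp add: offdiag_re_mult offdiag_im_mult)
    (auto simp: offdiag_re_def offdiag_im_def diag_diff_def scaleR_conv_of_real[where 'a=complex])

lemma offdiag_re_swap: "offdiag_re y x = - offdiag_re x y"
  by (auto simp: vec_eq_iff offdiag_re_def)

lemma lie_bracket_diag_mat:
  "lie_bracket (diag_mat f) G = (\<chi> a b. \<i> * of_real (f a - f b) * G $ a $ b)"
  by (simp add: vec_eq_iff lie_bracket_def matrix_matrix_mult_def diag_mat_def if_distrib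
      if_distribR algebra_simps cong: if_cong)

lemma lie_bracket_diag_mat_offdiag_re:
  assumes "x \<noteq> y"
  shows "lie_bracket (diag_mat f) (offdiag_re x y) = (f x - f y) *\<^sub>R offdiag_im x y"
  using assms unfolding lie_bracket_diag_mat vec_eq_iff
  by (auto simp: offdiag_re_def offdiag_im_def scaleR_conv_of_real[where 'a=complex] algebra_simps)

lemma lie_bracket_diag_mat_offdiag_im:
  assumes "x \<noteq> y"
  shows "lie_bracket (diag_mat f) (offdiag_im x y) = (f y - f x) *\<^sub>R offdiag_re x y"
  using assms unfolding lie_bracket_diag_mat vec_eq_iff
  by (auto simp: offdiag_re_def offdiag_im_def scaleR_conv_of_real[where 'a=complex] algebra_simps)

definition root_matrices :: "(complex^occ^occ) set" where
  "root_matrices =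
     {R. \<exists>x y. x \<noteq> y \<and> (R = offdiag_re x y \<or> R = offdiag_im x y \<or> R = diag_diff x y)}"

lemma weighted_su_diag:
  assumes "weighted_su X"
  shows "X $ a $ a = \<i> * of_real (Im (X $ a $ a))"
proof -
  have "of_nat (orbit_size a) * (X $ a $ a + cnj (X $ a $ a)) = 0"
    using assms by (simp add: weighted_su_def algebra_simps)
  then have "complex_of_real (2 * Re (X $ a $ a)) = 0"
    using orbit_size_pos[of a] by (simp add: complex_add_cnj)
  then show ?thesis
    by (simp add: complex_eq_iff)
qed

lemma weighted_su_offdiag_pair:
  assumes "weighted_su X" "a \<noteq> b"
  defines "c \<equiv> X $ a $ b / of_nat (orbit_size b)"
  shows "Re c *\<^sub>R offdiag_re a b + Im c *\<^sub>R offdiag_im a b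
           = (\<chi> i j. if (i = a \<and> j = b) \<or> (i = b \<and> j = a) then X $ i $ j else 0)"
proof -
  have mb: "(of_nat (orbit_size b) :: complex) \<noteq> 0"
    using orbit_size_pos[of b] by simp
  have "X $ a $ b = of_nat (orbit_size b) * c"
    using mb by (simp add: c_def)
  then have Xab: "X $ a $ b = of_nat (orbit_size b) * (of_real (Re c) + \<i> * of_real (Im c))"
    by (metis complex_eq)
  have "of_nat (orbit_size b) * X $ b $ a = - (of_nat (orbit_size a) * cnj (X $ a $ b))"
    using assms(1) by (simp add: weighted_su_def)
  also have "cnj (X $ a $ b) = of_nat (orbit_size b) * (of_real (Re c) - \<i> * of_real (Im c))"
    by (simp add: Xab)
  finally have "of_nat (orbit_size b) * X $ b $ a
      = of_nat (orbit_size b) * - (of_nat (orbit_size a) * (of_real (Re c) - \<i> * of_real (Im c)))"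
    by (simp add: algebra_simps)
  then have Xba: "X $ b $ a = - (of_nat (orbit_size a) * (of_real (Re c) - \<i> * of_real (Im c)))"
    by (simp only: mult_left_cancel[OF mb])
  show ?thesis
    unfolding vec_eq_iff
    using assms(2)
    by (auto simp: offdiag_re_def offdiag_im_def Xab Xba scaleR_conv_of_real[where 'a=complex]
        algebra_simps)
qed

lemma sum_offdiag_pairs:
  fixes X :: "'a::comm_ring_1^'n::finite^'n"
  shows "(\<Sum>p\<in>{p. fst p \<noteq> snd p}. \<chi> i j. if p = (i, j) \<or> p = (j, i) then X $ i $ j else 0)
           = (\<chi> i j. if i = j then 0 else 2 * X $ i $ j)"
proof -
  have "(\<Sum>p\<in>{p. fst p \<noteq> snd p}. if p \<in> {(i, j), (j, i)} then X $ i $ j else 0)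
      = (\<Sum>p\<in>{p. fst p \<noteq> snd p} \<inter> {(i, j), (j, i)}. X $ i $ j)" for i j
    by (rule sum.inter_restrict[symmetric]) simp
  moreover have "{p. fst p \<noteq> snd p} \<inter> {(i, j), (j, i)} = (if i = j then {} else {(i, j), (j, i)})"
    for i j :: 'n
    by auto
  ultimately show ?thesis
    by (simp add: vec_eq_iff)
qed

lemma weighted_su_diag_part:
  assumes X: "weighted_su X"
  shows "(\<Sum>a\<in>UNIV. Im (X $ a $ a) *\<^sub>R diag_diff a S300) = (\<chi> i j. if i = j then X $ i $ i else 0)"
proof -
  define c where "c a = complex_of_real (Im (X $ a $ a))" for a
  have "(\<Sum>a\<in>UNIV. c a) = 0"
    using X by (simp add: c_def weighted_su_def trace_def flip: Im_sum of_real_sum)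
  moreover have "diag_diff a S300 $ i $ j
      = (if i = j \<and> a = i then \<i> else 0) - (if i = j \<and> i = S300 then \<i> else 0)" for a i j
    by (auto simp: diag_diff_def)
  ultimately have "(\<Sum>a\<in>UNIV. Im (X $ a $ a) *\<^sub>R diag_diff a S300) $ i $ j
      = (\<Sum>a\<in>UNIV. (if i = j \<and> a = i then \<i> else 0) * c a)" for i j
    by (simp add: c_def scaleR_conv_of_real[where 'a=complex] right_diff_distrib sum_subtractf
        sum_distrib_right mult.commute sum_distrib_left[symmetric])
  then show ?thesis
    using weighted_su_diag[OF X]
    by (simp add: vec_eq_iff sum_if_mult_left c_def)
qed

lemma weighted_su_in_span_root_matrices:
  assumes X: "weighted_su X"
  shows "X \<in> span root_matrices"
proof -
  define pair where "pair p = (\<chi> i j. if p = (i, j) \<or> p = (j, i) then X $ i $ j else 0)" for p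
  have decomp: "X = (1/2) *\<^sub>R (\<Sum>p\<in>{p. fst p \<noteq> snd p}. pair p)
                    + (\<Sum>a\<in>UNIV. Im (X $ a $ a) *\<^sub>R diag_diff a S300)"
    unfolding pair_def sum_offdiag_pairs weighted_su_diag_part[OF X] by (simp add: vec_eq_iff)
  have "pair p \<in> span root_matrices" if "fst p \<noteq> snd p" for p
  proof (cases p)
    case (Pair a b)
    then have "pair p = Re (X $ a $ b / of_nat (orbit_size b)) *\<^sub>R offdiag_re a b
                        + Im (X $ a $ b / of_nat (orbit_size b)) *\<^sub>R offdiag_im a b"
      using weighted_su_offdiag_pair[OF X] that by (auto simp: pair_def vec_eq_iff)
    moreover have "offdiag_re a b \<in> root_matrices" "offdiag_im a b \<in> root_matrices"
      using that Pair unfolding root_matrices_def by auto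
    ultimately show ?thesis
      by (simp add: span_add span_base span_scale)
  qed
  moreover have "diag_diff a S300 \<in> span root_matrices" for a
  proof (cases "a = S300")
    case True
    then have "diag_diff a S300 = 0"
      by (simp add: diag_diff_def vec_eq_iff)
    then show ?thesis
      by (simp add: span_zero)
  qed (auto simp: root_matrices_def intro: span_base)
  ultimately show ?thesis
    by (subst decomp) (intro span_add span_scale span_sum; simp)
qed

section \<open>The restriction of the generated Lie algebra\<close>

definition restricted_Lie :: "(complex^occ^occ) set" where
  "restricted_Lie = sym_matrix ` Lie"

lemma Lie_preserves_Sym: "Y \<in> Lie \<Longrightarrow> \<forall>v\<in>Sym. Y *v v \<in> Sym"
  using Lie_perm_invariant perm_invariant_preserves_Sym by blast

lemma subspace_restricted_Lie: "subspace restricted_Lie"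
proof -
  have "sym_matrix X + sym_matrix Y \<in> restricted_Lie" if "X \<in> Lie" "Y \<in> Lie" for X Y
    using that lie_gen.add[of X _ Y] unfolding restricted_Lie_def Lie_def
    by (metis image_eqI sym_matrix_add)
  moreover have "r *\<^sub>R sym_matrix X \<in> restricted_Lie" if "X \<in> Lie" for r X
    using that lie_gen.scale[of X _ r] unfolding restricted_Lie_def Lie_def
    by (metis image_eqI sym_matrix_csmul_of_real)
  moreover have "0 \<in> restricted_Lie"
    using lie_gen.zero unfolding restricted_Lie_def Lie_def by (metis image_eqI sym_matrix_zero)
  ultimately show ?thesis
    unfolding subspace_def restricted_Lie_def by blast
qed

lemma lie_bracket_in_restricted_Lie:
  assumes "A \<in> restricted_Lie" "B \<in> restricted_Lie"
  shows "lie_bracket A B \<in> restricted_Lie"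
proof -
  obtain X Y where XY: "X \<in> Lie" "Y \<in> Lie" "A = sym_matrix X" "B = sym_matrix Y"
    using assms unfolding restricted_Lie_def by blast
  then have "lie_bracket A B = sym_matrix (X ** Y - Y ** X)"
    by (simp add: lie_bracket_def sym_matrix_diff sym_matrix_mult Lie_preserves_Sym)
  moreover have "X ** Y - Y ** X \<in> Lie"
    using XY(1,2) unfolding Lie_def by (rule lie_gen.bracket)
  ultimately show ?thesis
    unfolding restricted_Lie_def by blast
qed

lemma restricted_Lie_scaleR_cancel:
  assumes "c *\<^sub>R A \<in> restricted_Lie" "c \<noteq> 0"
  shows "A \<in> restricted_Lie"
  using subspace_scale[OF subspace_restricted_Lie assms(1), of "inverse c"] assms(2) by simp

section \<open>Images of the generators\<close>

definition local_op :: "op3 \<Rightarrow> op27" where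
  "local_op L = csmul \<i> (kron3 L (mat 1) (mat 1) + kron3 (mat 1) L (mat 1) + kron3 (mat 1) (mat 1) L)"

definition herm_im :: "3 \<Rightarrow> 3 \<Rightarrow> op3" where
  "herm_im p q = (\<chi> i j. if i = p \<and> j = q then \<i> else if i = q \<and> j = p then - \<i> else 0)"

lemma local_op_in_Lie: "adj L = L \<Longrightarrow> trace L = 0 \<Longrightarrow> local_op L \<in> Lie"
  unfolding Lie_def local_op_def by (rule lie_gen.gen) (auto simp: Loc_def)

lemma local_op_E3_in_Lie: "local_op E3 \<in> Lie"
  by (rule local_op_in_Lie) (simp_all add: adj_def E3_def vec_eq_iff forall_3 trace_def sum_UNIV_3)

lemma local_op_herm_im_in_Lie: "p \<noteq> q \<Longrightarrow> local_op (herm_im p q) \<in> Lie"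
  by (rule local_op_in_Lie) (auto simp: adj_def herm_im_def vec_eq_iff trace_def intro!: sum.neutral)

lemma H_in_Lie: "csmul \<i> Hint \<in> Lie"
  unfolding Lie_def by (rule lie_gen.gen) simp

text \<open>The eigenvalues of \<open>local_op E3 / \<i>\<close> and of \<open>Hint\<close> on \<open>sym_basis S\<^sub>n\<^sub>0\<^sub>n\<^sub>1\<^sub>n\<^sub>2\<close>:
  \<open>n\<^sub>0 - n\<^sub>1\<close> and \<open>((n\<^sub>0 - n\<^sub>1)\<^sup>2 - n\<^sub>0 - n\<^sub>1) / 2\<close>.\<close>
primrec e_weight :: "occ \<Rightarrow> real" where
  "e_weight S300 = 3" | "e_weight S210 = 1" | "e_weight S201 = 2" | "e_weight S120 = -1"
| "e_weight S111 = 0" | "e_weight S102 = 1" | "e_weight S030 = -3" | "e_weight S021 = -2"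
| "e_weight S012 = -1" | "e_weight S003 = 0"

primrec h_weight :: "occ \<Rightarrow> real" where
  "h_weight S300 = 3" | "h_weight S210 = -1" | "h_weight S201 = 1" | "h_weight S120 = -1"
| "h_weight S111 = -1" | "h_weight S102 = 0" | "h_weight S030 = 3" | "h_weight S021 = 1"
| "h_weight S012 = 0" | "h_weight S003 = 0"

lemma sym_matrix_orbit_sum: "sym_matrix Y $ a $ b = sum_list (map (\<lambda>t. Y $ occ_rep a $ t) (orbit b))"
proof -
  have "sym_matrix Y $ a $ b = (\<Sum>t\<in>UNIV. if occ_of t = b then Y $ occ_rep a $ t else 0)"
    by (simp add: sym_matrix_def matrix_vector_mult_def sym_basis_def if_distrib cong: if_cong)
  then show ?thesis
    by (simp add: sum_occ_of_eq)
qed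

lemma sym_matrix_local_op_E3: "sym_matrix (local_op E3) = diag_mat e_weight"
  unfolding vec_eq_iff
  apply (intro allI)
  subgoal for a b
    by (cases a; cases b) (simp_all add: sym_matrix_orbit_sum local_op_def csmul_def kron3_def
        E3_def diag_mat_def mat_def occ_rep_def)
  done

lemma sym_matrix_H: "sym_matrix (csmul \<i> Hint) = diag_mat h_weight"
  unfolding vec_eq_iff
  apply (intro allI)
  subgoal for a b
    by (cases a; cases b) (simp_all add: sym_matrix_orbit_sum Hint_def csmul_def kron3_def
        E3_def diag_mat_def mat_def occ_rep_def)
  done

lemma sym_matrix_local_op_herm_im_01:
  "sym_matrix (local_op (herm_im 0 1)) = offdiag_re S210 S300 + (2/3) *\<^sub>R offdiag_re S120 S210
     + (1/3) *\<^sub>R offdiag_re S111 S201 + offdiag_re S030 S120 + (1/3) *\<^sub>R offdiag_re S021 S111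
     + (1/3) *\<^sub>R offdiag_re S012 S102"
  unfolding vec_eq_iff
  apply (intro allI)
  subgoal for a b
    by (cases a; cases b) (simp_all add: sym_matrix_orbit_sum local_op_def csmul_def kron3_def
        herm_im_def mat_def occ_rep_def offdiag_re_def orbit_size_def
        scaleR_conv_of_real[where 'a=complex])
  done

lemma sym_matrix_local_op_herm_im_02:
  "sym_matrix (local_op (herm_im 0 2)) = offdiag_re S201 S300 + (1/3) *\<^sub>R offdiag_re S111 S210
     + (2/3) *\<^sub>R offdiag_re S102 S201 + (1/3) *\<^sub>R offdiag_re S021 S120 + (1/3) *\<^sub>R offdiag_re S012 S111
     + offdiag_re S003 S102"
  unfolding vec_eq_iff
  apply (intro allI)
  subgoal for a b
    by (cases a; cases b) (simp_all add: sym_matrix_orbit_sum local_op_def csmul_def kron3_def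
        herm_im_def mat_def occ_rep_def offdiag_re_def orbit_size_def
        scaleR_conv_of_real[where 'a=complex])
  done

lemma sym_matrix_local_op_herm_im_12:
  "sym_matrix (local_op (herm_im 1 2)) = (1/3) *\<^sub>R offdiag_re S201 S210 + (1/3) *\<^sub>R offdiag_re S111 S120
     + (1/3) *\<^sub>R offdiag_re S102 S111 + offdiag_re S021 S030 + (2/3) *\<^sub>R offdiag_re S012 S021
     + offdiag_re S003 S012"
  unfolding vec_eq_iff
  apply (intro allI)
  subgoal for a b
    by (cases a; cases b) (simp_all add: sym_matrix_orbit_sum local_op_def csmul_def kron3_def
        herm_im_def mat_def occ_rep_def offdiag_re_def orbit_size_def
        scaleR_conv_of_real[where 'a=complex])
  done

section \<open>All root matrices lie in the restricted algebra\<close>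

lemma lie_bracket_add_right: "lie_bracket X (Y + Z) = lie_bracket X Y + lie_bracket X Z"
  and lie_bracket_diff_right: "lie_bracket X (Y - Z) = lie_bracket X Y - lie_bracket X Z"
  and lie_bracket_minus_right: "lie_bracket X (- Y) = - lie_bracket X Y"
  for X Y Z :: "'a::ring_1^'n^'n"
  by (simp_all add: lie_bracket_def vec_eq_iff matrix_matrix_mult_def sum.distrib sum_subtractf
      sum_negf algebra_simps)

lemma lie_bracket_scaleR_right: "lie_bracket X (c *\<^sub>R Y) = c *\<^sub>R lie_bracket X Y"
  for X Y :: "'a::real_algebra_1^'n^'n"
  by (simp add: lie_bracket_def vec_eq_iff matrix_matrix_mult_def scaleR_sum_right algebra_simps)

definition weight_ad :: "real \<Rightarrow> complex^occ^occ \<Rightarrow> complex^occ^occ" where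
  "weight_ad \<beta> G = lie_bracket (diag_mat (\<lambda>a. h_weight a + \<beta> * e_weight a)) G"

text \<open>By \<open>lie_bracket_diag_mat_offdiag_re\<close> and \<open>lie_bracket_diag_mat_offdiag_im\<close>, \<open>weight_ad \<beta>\<close> scales
  the root matrices at \<open>(x, y)\<close> by \<open>(h_weight x - h_weight y) + \<beta> (e_weight x - e_weight y)\<close>.
  The roots occurring in \<open>sym_matrix (local_op (herm_im p q))\<close> lie in five directions of the
  \<open>(h_weight, e_weight)\<close>-plane, each annihilated by exactly one \<open>\<beta> \<in> {-2, -1, 0, 1, 2}\<close>;
  \<open>isolate \<beta>\<close> keeps only the roots in the direction annihilated by \<open>\<beta>\<close>.\<close>
definition isolate :: "real \<Rightarrow> complex^occ^occ \<Rightarrow> complex^occ^occ" where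
  "isolate \<beta> G = fold weight_ad (filter (\<lambda>b. b \<noteq> \<beta>) [-2, -1, 0, 1, 2]) G"

lemma diag_mat_weight_in_restricted_Lie: "diag_mat (\<lambda>a. h_weight a + \<beta> * e_weight a) \<in> restricted_Lie"
proof -
  have "diag_mat h_weight \<in> restricted_Lie" "diag_mat e_weight \<in> restricted_Lie"
    using H_in_Lie local_op_E3_in_Lie sym_matrix_H sym_matrix_local_op_E3
    unfolding restricted_Lie_def by (metis image_eqI)+
  moreover have "diag_mat (\<lambda>a. h_weight a + \<beta> * e_weight a)
      = diag_mat h_weight + \<beta> *\<^sub>R diag_mat e_weight"
    by (simp add: vec_eq_iff diag_mat_def scaleR_conv_of_real[where 'a=complex] algebra_simps)
  ultimately show ?thesis
    using subspace_restricted_Lie by (simp add: subspace_add subspace_scale)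
qed

lemma isolate_in_restricted_Lie: "G \<in> restricted_Lie \<Longrightarrow> isolate \<beta> G \<in> restricted_Lie"
proof -
  have "fold weight_ad bs G \<in> restricted_Lie" if "G \<in> restricted_Lie" for bs G
    using that
  proof (induction bs arbitrary: G)
    case (Cons b bs)
    then show ?case
      by (simp add: weight_ad_def lie_bracket_in_restricted_Lie diag_mat_weight_in_restricted_Lie)
  qed simp
  then show "G \<in> restricted_Lie \<Longrightarrow> isolate \<beta> G \<in> restricted_Lie"
    by (simp add: isolate_def)
qed

lemma offdiag_re_in_restricted_Lie_if_isolated:
  assumes "G \<in> restricted_Lie" "isolate \<beta> G = c *\<^sub>R offdiag_re x y" "c \<noteq> 0"
  shows "offdiag_re x y \<in> restricted_Lie"
  using isolate_in_restricted_Lie[OF assms(1), of \<beta>] assms(2,3) restricted_Lie_scaleR_cancel by simp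

lemmas isolate_simps = isolate_def weight_ad_def lie_bracket_add_right lie_bracket_diff_right
  lie_bracket_minus_right lie_bracket_scaleR_right lie_bracket_diag_mat_offdiag_re
  lie_bracket_diag_mat_offdiag_im

lemma sym_matrix_local_op_herm_im_in_restricted_Lie:
  "p \<noteq> q \<Longrightarrow> sym_matrix (local_op (herm_im p q)) \<in> restricted_Lie"
  unfolding restricted_Lie_def using local_op_herm_im_in_Lie by blast

lemma offdiag_re_seeds_in_restricted_Lie:
  "offdiag_re S111 S201 \<in> restricted_Lie" "offdiag_re S021 S111 \<in> restricted_Lie"
  "offdiag_re S012 S111 \<in> restricted_Lie" "offdiag_re S102 S111 \<in> restricted_Lie"
  "offdiag_re S201 S210 \<in> restricted_Lie" "offdiag_re S201 S300 \<in> restricted_Lie"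
  "offdiag_re S021 S120 \<in> restricted_Lie" "offdiag_re S021 S030 \<in> restricted_Lie"
  "offdiag_re S102 S201 \<in> restricted_Lie"
proof -
  note K01 = sym_matrix_local_op_herm_im_in_restricted_Lie[of 0 1, simplified]
    and K02 = sym_matrix_local_op_herm_im_in_restricted_Lie[of 0 2, simplified]
    and K12 = sym_matrix_local_op_herm_im_in_restricted_Lie[of 1 2, simplified]
  note K_simps = sym_matrix_local_op_herm_im_01 sym_matrix_local_op_herm_im_02
    sym_matrix_local_op_herm_im_12 isolate_simps
  show "offdiag_re S111 S201 \<in> restricted_Lie"
    by (rule offdiag_re_in_restricted_Lie_if_isolated[OF K01, where \<beta>="-1" and c="-32"])
      (simp_all add: K_simps)
  show "offdiag_re S021 S111 \<in> restricted_Lie"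
    by (rule offdiag_re_in_restricted_Lie_if_isolated[OF K01, where \<beta>=1 and c="-32"])
      (simp_all add: K_simps)
  show "offdiag_re S012 S111 \<in> restricted_Lie"
    by (rule offdiag_re_in_restricted_Lie_if_isolated[OF K02, where \<beta>=1 and c="-2"])
      (simp_all add: K_simps)
  show "offdiag_re S102 S111 \<in> restricted_Lie"
    by (rule offdiag_re_in_restricted_Lie_if_isolated[OF K12, where \<beta>="-1" and c="-2"])
      (simp_all add: K_simps)
  show "offdiag_re S201 S210 \<in> restricted_Lie"
    by (rule offdiag_re_in_restricted_Lie_if_isolated[OF K12, where \<beta>="-2" and c=8])
      (simp_all add: K_simps)
  show "offdiag_re S201 S300 \<in> restricted_Lie"
    by (rule offdiag_re_in_restricted_Lie_if_isolated[OF K02, where \<beta>="-2" and c=24])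
      (simp_all add: K_simps)
  show "offdiag_re S021 S120 \<in> restricted_Lie"
    by (rule offdiag_re_in_restricted_Lie_if_isolated[OF K02, where \<beta>=2 and c=8])
      (simp_all add: K_simps)
  show "offdiag_re S021 S030 \<in> restricted_Lie"
    by (rule offdiag_re_in_restricted_Lie_if_isolated[OF K12, where \<beta>=2 and c=24])
      (simp_all add: K_simps)
  show "offdiag_re S102 S201 \<in> restricted_Lie"
    by (rule offdiag_re_in_restricted_Lie_if_isolated[OF K02, where \<beta>="-1" and c="-4"])
      (simp_all add: K_simps)
qed

lemma offdiag_re_swap_in_restricted_Lie:
  "offdiag_re x y \<in> restricted_Lie \<Longrightarrow> offdiag_re y x \<in> restricted_Lie"
  using subspace_neg[OF subspace_restricted_Lie] by (simp add: offdiag_re_swap[of y x])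

text \<open>No weight separates the two roots \<open>(S111, S210)\<close> and \<open>(S003, S102)\<close> of
  \<open>local_op (herm_im 0 2)\<close>; a bracket with \<open>offdiag_re S201 S102\<close> kills the first one.\<close>
lemma offdiag_re_S201_S003_in_restricted_Lie: "offdiag_re S201 S003 \<in> restricted_Lie"
proof -
  have "isolate 0 (sym_matrix (local_op (herm_im 0 2)))
      = (4/3) *\<^sub>R offdiag_re S111 S210 - 4 *\<^sub>R offdiag_re S102 S003"
    by (simp add: sym_matrix_local_op_herm_im_02 isolate_simps offdiag_re_swap[of S003 S102])
  then have "lie_bracket (offdiag_re S201 S102) (isolate 0 (sym_matrix (local_op (herm_im 0 2))))
      = (-12) *\<^sub>R offdiag_re S201 S003"
    by (simp add: lie_bracket_diff_right lie_bracket_scaleR_right lie_bracket_offdiag_re_disjoint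
        lie_bracket_offdiag_re_chain orbit_size_def)
  moreover have "lie_bracket (offdiag_re S201 S102) (isolate 0 (sym_matrix (local_op (herm_im 0 2))))
      \<in> restricted_Lie"
    by (intro lie_bracket_in_restricted_Lie isolate_in_restricted_Lie
        sym_matrix_local_op_herm_im_in_restricted_Lie
        offdiag_re_swap_in_restricted_Lie[OF offdiag_re_seeds_in_restricted_Lie(9)]) simp
  ultimately have "(-12) *\<^sub>R offdiag_re S201 S003 \<in> restricted_Lie"
    by (simp only:)
  then show ?thesis
    by (rule restricted_Lie_scaleR_cancel) simp
qed

lemma offdiag_re_chain_in_restricted_Lie:
  assumes "offdiag_re x y \<in> restricted_Lie" "offdiag_re y z \<in> restricted_Lie"
    and "x \<noteq> y" "y \<noteq> z" "x \<noteq> z"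
  shows "offdiag_re x z \<in> restricted_Lie"
proof (rule restricted_Lie_scaleR_cancel)
  show "real (orbit_size y) *\<^sub>R offdiag_re x z \<in> restricted_Lie"
    using lie_bracket_in_restricted_Lie[OF assms(1,2)] lie_bracket_offdiag_re_chain[OF assms(3-5)]
    by simp
  show "real (orbit_size y) \<noteq> 0"
    using orbit_size_pos[of y] by simp
qed

lemma offdiag_re_S111_in_restricted_Lie:
  assumes "x \<noteq> S111"
  shows "offdiag_re S111 x \<in> restricted_Lie"
proof -
  note seeds = offdiag_re_seeds_in_restricted_Lie
  note chain = offdiag_re_chain_in_restricted_Lie
  have S201: "offdiag_re S111 S201 \<in> restricted_Lie" and S021: "offdiag_re S111 S021 \<in> restricted_Lie"
    using seeds(1) offdiag_re_swap_in_restricted_Lie[OF seeds(2)] .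
  show ?thesis
  proof (cases x)
    case S300 then show ?thesis using chain[OF S201 seeds(6)] by simp
  next
    case S210 then show ?thesis using chain[OF S201 seeds(5)] by simp
  next
    case S201 then show ?thesis using seeds(1) by simp
  next
    case S120 then show ?thesis using chain[OF S021 seeds(7)] by simp
  next
    case S111 then show ?thesis using assms by simp
  next
    case S102 then show ?thesis using offdiag_re_swap_in_restricted_Lie[OF seeds(4)] by simp
  next
    case S030 then show ?thesis using chain[OF S021 seeds(8)] by simp
  next
    case S021 then show ?thesis using offdiag_re_swap_in_restricted_Lie[OF seeds(2)] by simp
  next
    case S012 then show ?thesis using offdiag_re_swap_in_restricted_Lie[OF seeds(3)] by simp
  next
    case S003 then show ?thesis using chain[OF S201 offdiag_re_S201_S003_in_restricted_Lie] by simp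
  qed
qed

lemma offdiag_re_in_restricted_Lie:
  assumes "x \<noteq> y"
  shows "offdiag_re x y \<in> restricted_Lie"
proof -
  consider "x = S111" | "y = S111" | "x \<noteq> S111" "y \<noteq> S111"
    by blast
  then show ?thesis
  proof cases
    case 1
    then show ?thesis using assms offdiag_re_S111_in_restricted_Lie by simp
  next
    case 2
    then show ?thesis
      using assms offdiag_re_swap_in_restricted_Lie[OF offdiag_re_S111_in_restricted_Lie[of x]] by simp
  next
    case 3
    then show ?thesis
      using assms offdiag_re_chain_in_restricted_Lie[OF
          offdiag_re_swap_in_restricted_Lie[OF offdiag_re_S111_in_restricted_Lie[of x]]
          offdiag_re_S111_in_restricted_Lie[of y]]
      by simp
  qed
qed

lemma weights_separate: "h_weight x = h_weight y \<Longrightarrow> e_weight x = e_weight y \<Longrightarrow> x = y"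
  by (cases x; cases y) simp_all

lemma offdiag_im_in_restricted_Lie:
  assumes "x \<noteq> y"
  shows "offdiag_im x y \<in> restricted_Lie"
proof -
  have "\<exists>\<beta>. h_weight x + \<beta> * e_weight x \<noteq> h_weight y + \<beta> * e_weight y"
  proof (cases "h_weight x = h_weight y")
    case True
    then have "e_weight x \<noteq> e_weight y"
      using weights_separate assms by blast
    with True show ?thesis
      by (intro exI[of _ 1]) simp
  qed (intro exI[of _ 0], simp)
  then obtain \<beta> where \<beta>: "h_weight x + \<beta> * e_weight x \<noteq> h_weight y + \<beta> * e_weight y"
    by blast
  have "lie_bracket (diag_mat (\<lambda>a. h_weight a + \<beta> * e_weight a)) (offdiag_re x y) \<in> restricted_Lie"
    using assms by (intro lie_bracket_in_restricted_Lie diag_mat_weight_in_restricted_Lie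
        offdiag_re_in_restricted_Lie)
  then show ?thesis
    using restricted_Lie_scaleR_cancel \<beta> assms by (simp add: lie_bracket_diag_mat_offdiag_re)
qed

lemma diag_diff_in_restricted_Lie:
  assumes "x \<noteq> y"
  shows "diag_diff x y \<in> restricted_Lie"
proof (rule restricted_Lie_scaleR_cancel)
  have "lie_bracket (offdiag_re x y) (offdiag_im x y) \<in> restricted_Lie"
    using assms by (intro lie_bracket_in_restricted_Lie offdiag_re_in_restricted_Lie
        offdiag_im_in_restricted_Lie)
  then show "(2 * real (orbit_size x) * real (orbit_size y)) *\<^sub>R diag_diff x y \<in> restricted_Lie"
    by (simp only: lie_bracket_offdiag_re_im[OF assms])
  show "2 * real (orbit_size x) * real (orbit_size y) \<noteq> 0"
    using orbit_size_pos[of x] orbit_size_pos[of y] by simp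
qed

lemma weighted_su_in_restricted_Lie:
  assumes "weighted_su X"
  shows "X \<in> restricted_Lie"
proof -
  have "root_matrices \<subseteq> restricted_Lie"
    by (auto simp: root_matrices_def offdiag_re_in_restricted_Lie offdiag_im_in_restricted_Lie
        diag_diff_in_restricted_Lie)
  then have "span root_matrices \<subseteq> restricted_Lie"
    by (rule span_minimal) (rule subspace_restricted_Lie)
  then show ?thesis
    using weighted_su_in_span_root_matrices[OF assms] by blast
qed

section \<open>The restriction of a traceless skew-adjoint operator\<close>

lemma cinner_commute: "cinner v w = cnj (cinner w v)"
  by (simp add: cinner_def mult.commute)

lemma cinner_diff_right: "cinner w (u - v) = cinner w u - cinner w v"
  by (simp add: cinner_def right_diff_distrib sum_subtractf)

lemma cinner_scalar_right: "cinner w (k *s v) = k * cinner w v"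
  by (simp add: cinner_def sum_distrib_left mult_ac)

lemma cinner_adj: "cinner v (Q *v w) = cinner (adj Q *v v) w"
proof -
  have "cinner v (Q *v w) = (\<Sum>i\<in>UNIV. \<Sum>j\<in>UNIV. cnj (v $ i) * Q $ i $ j * w $ j)"
    by (simp add: cinner_def matrix_vector_mult_def sum_distrib_left mult.assoc)
  also have "\<dots> = (\<Sum>j\<in>UNIV. \<Sum>i\<in>UNIV. cnj (v $ i) * Q $ i $ j * w $ j)"
    by (rule sum.swap)
  also have "\<dots> = (\<Sum>j\<in>UNIV. (\<Sum>i\<in>UNIV. Q $ i $ j * cnj (v $ i)) * w $ j)"
    by (simp add: sum_distrib_left sum_distrib_right mult_ac)
  also have "\<dots> = cinner (adj Q *v v) w"
    by (simp add: cinner_def matrix_vector_mult_def adj_def)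
  finally show ?thesis .
qed

lemma cinner_uminus_matrix_left: "cinner ((- Q) *v v) w = - cinner (Q *v v) w"
  by (simp add: cinner_def matrix_vector_mult_def sum_negf)

lemma sum_UNIV_index_by_occ:
  fixes g :: "occ \<Rightarrow> 'a::comm_semiring_1"
  shows "(\<Sum>t\<in>UNIV. g (occ_of t)) = (\<Sum>a\<in>UNIV. of_nat (orbit_size a) * g a)"
proof -
  have "(\<Sum>t\<in>UNIV. g (occ_of t)) = (\<Sum>t\<in>UNIV. \<Sum>a\<in>UNIV. if occ_of t = a then g a else 0)"
    by simp
  also have "\<dots> = (\<Sum>a\<in>UNIV. \<Sum>t\<in>UNIV. if occ_of t = a then g a else 0)"
    by (rule sum.swap)
  also have "\<dots> = (\<Sum>a\<in>UNIV. (\<Sum>t\<in>UNIV. if occ_of t = a then 1 else 0) * g a)"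
    by (simp add: sum_distrib_right if_distrib if_distribR cong: if_cong)
  finally show ?thesis
    by (simp add: sum_occ_of_indicator)
qed

lemma sym_matrix_skew:
  assumes "\<forall>v\<in>Sym. X *v v \<in> Sym" "adj X = - X"
  shows "of_nat (orbit_size a) * sym_matrix X $ a $ b
           = - (of_nat (orbit_size b) * cnj (sym_matrix X $ b $ a))"
proof -
  have entry: "cinner (sym_basis a) (X *v sym_basis b) = of_nat (orbit_size a) * sym_matrix X $ a $ b"
    for a b
    using assms(1) sym_basis_in_Sym by (simp add: cinner_sym_basis sym_matrix_def)
  have "cinner (sym_basis a) (X *v sym_basis b) = - cinner (X *v sym_basis a) (sym_basis b)"
    by (simp add: cinner_adj assms(2) cinner_uminus_matrix_left)
  also have "\<dots> = - cnj (cinner (sym_basis b) (X *v sym_basis a))"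
    by (simp add: cinner_commute[of "X *v sym_basis a"])
  finally show ?thesis
    by (simp add: entry)
qed

text \<open>Since \<open>X\<close> vanishes on the orthogonal complement of \<open>Sym\<close>, it agrees on a basis vector
  \<open>axis t 1\<close> with \<open>X\<close> applied to the projection of \<open>axis t 1\<close> onto \<open>Sym\<close>.\<close>
lemma trace_eq_trace_sym_matrix:
  assumes preserves: "\<forall>v\<in>Sym. X *v v \<in> Sym"
    and perp: "\<forall>v. (\<forall>w\<in>Sym. cinner w v = 0) \<longrightarrow> X *v v = 0"
  shows "trace X = trace (sym_matrix X)"
proof -
  have diag: "X $ t $ t = sym_matrix X $ occ_of t $ occ_of t / of_nat (orbit_size (occ_of t))" for t
  proof -
    define k :: complex where "k = 1 / of_nat (orbit_size (occ_of t))"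
    define v where "v = axis t 1 - k *s sym_basis (occ_of t)"
    have "cinner w v = 0" if w: "w \<in> Sym" for w
    proof -
      have "cinner w (axis t 1) = cnj (w $ t)"
        by (simp add: cinner_def axis_def if_distrib cong: if_cong)
      moreover have "cinner w (sym_basis (occ_of t)) = of_nat (orbit_size (occ_of t)) * cnj (w $ t)"
        using cinner_sym_basis[OF w] Sym_apply[OF w, of t] by (simp add: cinner_commute[of w])
      ultimately show ?thesis
        using orbit_size_pos[of "occ_of t"]
        by (simp add: v_def k_def cinner_diff_right cinner_scalar_right)
    qed
    then have "X *v v = 0"
      using perp by blast
    then have "X *v axis t 1 = k *s (X *v sym_basis (occ_of t))"
      by (simp add: v_def matrix_vector_mult_diff_distrib vector_scalar_commute)
    then have "X $ t $ t = k * (X *v sym_basis (occ_of t)) $ t"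
      by (simp add: vec_eq_iff matrix_vector_mult_def axis_def if_distrib cong: if_cong)
    also have "(X *v sym_basis (occ_of t)) $ t = sym_matrix X $ occ_of t $ occ_of t"
      using Sym_apply[of "X *v sym_basis (occ_of t)" t] preserves sym_basis_in_Sym
      by (simp add: sym_matrix_def)
    finally show ?thesis
      by (simp add: k_def)
  qed
  have "trace X = (\<Sum>a\<in>UNIV. of_nat (orbit_size a) * (sym_matrix X $ a $ a / of_nat (orbit_size a)))"
    unfolding trace_def diag by (rule sum_UNIV_index_by_occ)
  also have "\<dots> = trace (sym_matrix X)"
    using orbit_size_pos by (simp add: trace_def)
  finally show ?thesis .
qed

theorem proposition6p2:
  fixes X :: op27
  assumes "\<forall>v\<in>Sym. X *v v \<in> Sym"
    and "\<forall>v. (\<forall>w\<in>Sym. cinner w v = 0) \<longrightarrow> X *v v = 0"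
    and "adj X = - X"
    and "trace X = 0"
  shows "\<exists>Y\<in>Lie. \<forall>v\<in>Sym. Y *v v = X *v v"
proof -
  have "weighted_su (sym_matrix X)"
    using sym_matrix_skew[OF assms(1,3)] trace_eq_trace_sym_matrix[OF assms(1,2)] assms(4)
    by (simp add: weighted_su_def)
  then obtain Y where "Y \<in> Lie" "sym_matrix Y = sym_matrix X"
    using weighted_su_in_restricted_Lie unfolding restricted_Lie_def by (metis imageE)
  then have "\<forall>v\<in>Sym. Y *v v = X *v v"
    using assms(1) Lie_preserves_Sym eq_on_Sym_if_sym_matrix_eq by blast
  with \<open>Y \<in> Lie\<close> show ?thesis
    by blast
qed

end
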